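(* Let $X$ be a separable Hilbert space and $f(z)=\sum_{k\ge1}a_kz^{n_k}\in H^2(\mathbb{D},X)$ a lacunary series with all $a_k\neq0$ and infinitely many terms (so $f$ is not a polynomial), such that the sequence $(a_k/\|a_k\|)_{k\ge1}$ is relatively compact in $X$. Then there exists $x\in X$, $x\neq0$, such that $$H^2\otimes x\subset E_{S^{*N}f}\quad\text{for all }N\ge0.$$
   Context: $H^2(\mathbb{D},X)$: $X$-valued power series with square-summable coefficient norms; $S^*$ the backward shift $\sum\hat f(n)z^n\mapsto\sum \hat f(n+1)z^n$; $E_g$ the closed linear span of $\{S^{*n}g:n\ge0\}$. Lacunary: $n_{k+1}/n_k\ge d>1$ for all $k$. $H^2\otimes x=\{hx: h\in H^2\}$ where $H^2$ is the scalar Hardy space. *)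

theory Defs
  imports "HOL-Analysis.Analysis"
begin

text \<open>A complex Hilbert space is encoded as a real Hilbert space (type class
  real_inner + complete_space) together with a complex structure J
  (real-linear, isometric, J (J x) = - x), playing the role of multiplication by i.\<close>

definition complex_structure :: "('a::real_inner \<Rightarrow> 'a) \<Rightarrow> bool" where
  "complex_structure J \<longleftrightarrow> linear J \<and> (\<forall>x. J (J x) = - x) \<and> (\<forall>x. norm (J x) = norm x)"

definition cscale :: "('a::real_vector \<Rightarrow> 'a) \<Rightarrow> complex \<Rightarrow> 'a \<Rightarrow> 'a" where
  "cscale J c x = Re c *\<^sub>R x + Im c *\<^sub>R J x"

definition separable_space :: "'a::topological_space itself \<Rightarrow> bool" where
  "separable_space _ \<longleftrightarrow> (\<exists>D::'a set. countable D \<and> closure D = UNIV)"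

text \<open>Elements of H^2(D,X) identified with their Taylor coefficient sequences.\<close>
definition H2 :: "(nat \<Rightarrow> 'a::real_normed_vector) set" where
  "H2 = {f. summable (\<lambda>n. (norm (f n))\<^sup>2)}"

definition H2dist :: "(nat \<Rightarrow> 'a::real_normed_vector) \<Rightarrow> (nat \<Rightarrow> 'a) \<Rightarrow> real" where
  "H2dist f g = sqrt (\<Sum>n. (norm (f n - g n))\<^sup>2)"

definition bshift :: "(nat \<Rightarrow> 'a) \<Rightarrow> (nat \<Rightarrow> 'a)" where
  "bshift f = (\<lambda>n. f (Suc n))"

definition shift_span :: "('a::real_vector \<Rightarrow> 'a) \<Rightarrow> (nat \<Rightarrow> 'a) \<Rightarrow> (nat \<Rightarrow> 'a) set" where
  "shift_span J g = {p. \<exists>(c::nat \<Rightarrow> complex) M.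
      p = (\<lambda>j. \<Sum>n<M. cscale J (c n) ((bshift ^^ n) g j))}"

definition Egen :: "('a::real_normed_vector \<Rightarrow> 'a) \<Rightarrow> (nat \<Rightarrow> 'a) \<Rightarrow> (nat \<Rightarrow> 'a) set" where
  "Egen J g = {h \<in> H2. \<forall>e>0. \<exists>p \<in> shift_span J g. H2dist h p < e}"

definition H2_tensor :: "('a::real_vector \<Rightarrow> 'a) \<Rightarrow> 'a \<Rightarrow> (nat \<Rightarrow> 'a) set" where
  "H2_tensor J x = {(\<lambda>n. cscale J (h n) x) | h::nat \<Rightarrow> complex. summable (\<lambda>n. (cmod (h n))\<^sup>2)}"

end

theory Submission
  imports Defs
begin

text \<open>
  By compactness there is a unit vector x around which the directions of the a_k keep
  a non-vanishing proportion of the tail energy sum_(k >= K) |a_k|^2.  If some h in H^2 were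
  orthogonal to all S*^p f with p >= N, pairing h with the shift aligning the frequency n_k
  with position m isolates the term (a_k, h_m): lacunarity leaves no frequency in the window
  just below n_k, and every difference n_j - n_k is realised by a bounded number of k.  This
  bounds sum_(k >= K) (a_k, h_m)^2 by a vanishing fraction of the tail energy, forcing
  (h_m, x) = 0 and, applied to i h, (h_m, i x) = 0; separation in a Hilbert space then gives
  H^2 (x) x inside the closed span.
\<close>

section \<open>Square-summable sequences as a Hilbert space\<close>

lemma H2_zero: "(\<lambda>n. 0) \<in> H2"
  by (simp add: H2_def)

lemma norm_add_sq_le:
  fixes x y :: "'b::real_normed_vector"
  shows "(norm (x + y))\<^sup>2 \<le> 2 * (norm x)\<^sup>2 + 2 * (norm y)\<^sup>2"
proof -
  have "(norm (x + y))\<^sup>2 \<le> (norm x + norm y)\<^sup>2"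
    by (simp add: norm_triangle_ineq power_mono)
  also have "\<dots> \<le> 2 * (norm x)\<^sup>2 + 2 * (norm y)\<^sup>2"
    using sum_squares_bound[of "norm x" "norm y"] by (simp add: power2_eq_square algebra_simps)
  finally show ?thesis .
qed

lemma H2_add: "f \<in> H2 \<Longrightarrow> g \<in> H2 \<Longrightarrow> (\<lambda>n. f n + g n) \<in> H2"
  unfolding H2_def
proof (clarsimp, rule summable_comparison_test')
  assume "summable (\<lambda>n. (norm (f n))\<^sup>2)" "summable (\<lambda>n. (norm (g n))\<^sup>2)"
  then show "summable (\<lambda>n. 2 * (norm (f n))\<^sup>2 + 2 * (norm (g n))\<^sup>2)"
    by (intro summable_add summable_mult)
  show "norm ((norm (f n + g n))\<^sup>2) \<le> 2 * (norm (f n))\<^sup>2 + 2 * (norm (g n))\<^sup>2" for n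
    using norm_add_sq_le[of "f n" "g n"] by simp
qed

lemma H2_scale: "f \<in> H2 \<Longrightarrow> (\<lambda>n. c *\<^sub>R f n) \<in> H2"
  unfolding H2_def by (simp add: power_mult_distrib summable_mult)

lemma H2_uminus: "f \<in> H2 \<Longrightarrow> (\<lambda>n. - f n) \<in> H2"
  unfolding H2_def by simp

lemma H2_diff: "f \<in> H2 \<Longrightarrow> g \<in> H2 \<Longrightarrow> (\<lambda>n. f n - g n) \<in> H2"
  using H2_add[of f "\<lambda>n. - g n"] H2_uminus[of g] by simp

lemma H2_shift: "f \<in> H2 \<Longrightarrow> (\<lambda>n. f (n + p)) \<in> H2"
  using summable_iff_shift[of "\<lambda>l. (norm (f l))\<^sup>2" p] by (simp add: H2_def)

lemma H2_inner_summable: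
  fixes f g :: "nat \<Rightarrow> 'a::real_inner"
  assumes "f \<in> H2" "g \<in> H2"
  shows "summable (\<lambda>n. inner (f n) (g n))"
proof (rule summable_comparison_test'[where g="\<lambda>n. (norm (f n))\<^sup>2 + (norm (g n))\<^sup>2"])
  show "summable (\<lambda>n. (norm (f n))\<^sup>2 + (norm (g n))\<^sup>2)"
    using assms by (intro summable_add) (auto simp: H2_def)
  fix n
  have "\<bar>inner (f n) (g n)\<bar> \<le> norm (f n) * norm (g n)"
    by (rule Cauchy_Schwarz_ineq2)
  also have "\<dots> \<le> 2 * norm (f n) * norm (g n)"
    by simp
  also have "\<dots> \<le> (norm (f n))\<^sup>2 + (norm (g n))\<^sup>2"
    by (rule sum_squares_bound)
  finally show "norm (inner (f n) (g n)) \<le> (norm (f n))\<^sup>2 + (norm (g n))\<^sup>2"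
    by simp
qed

lemma H2_of_bounded_partial_sums:
  assumes "\<And>P. (\<Sum>n<P. (norm (g n))\<^sup>2) \<le> B"
  shows "g \<in> H2" and "(\<Sum>n. (norm (g n))\<^sup>2) \<le> B"
proof -
  show "g \<in> H2"
    unfolding H2_def by (auto intro: summableI_nonneg_bounded assms)
  then show "(\<Sum>n. (norm (g n))\<^sup>2) \<le> B"
    by (auto simp: H2_def intro: suminf_le_const assms)
qed

typedef (overloaded) 'a l2 = "H2 :: (nat \<Rightarrow> 'a::real_inner) set"
  morphisms seq mk_l2
  using H2_zero by blast

setup_lifting type_definition_l2

instantiation l2 :: (real_inner) real_inner
begin

lift_definition zero_l2 :: "'a l2" is "\<lambda>n. 0" by (rule H2_zero)
lift_definition plus_l2 :: "'a l2 \<Rightarrow> 'a l2 \<Rightarrow> 'a l2" is "\<lambda>f g n. f n + g n" by (rule H2_add)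
lift_definition minus_l2 :: "'a l2 \<Rightarrow> 'a l2 \<Rightarrow> 'a l2" is "\<lambda>f g n. f n - g n" by (rule H2_diff)
lift_definition uminus_l2 :: "'a l2 \<Rightarrow> 'a l2" is "\<lambda>f n. - f n" by (rule H2_uminus)
lift_definition scaleR_l2 :: "real \<Rightarrow> 'a l2 \<Rightarrow> 'a l2" is "\<lambda>c f n. c *\<^sub>R f n" by (rule H2_scale)
lift_definition inner_l2 :: "'a l2 \<Rightarrow> 'a l2 \<Rightarrow> real" is "\<lambda>f g. \<Sum>n. inner (f n) (g n)" .

definition norm_l2 :: "'a l2 \<Rightarrow> real" where "norm_l2 x = sqrt (inner x x)"
definition sgn_l2 :: "'a l2 \<Rightarrow> 'a l2" where "sgn_l2 x = scaleR (inverse (norm x)) x"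
definition dist_l2 :: "'a l2 \<Rightarrow> 'a l2 \<Rightarrow> real" where "dist_l2 x y = norm (x - y)"
definition uniformity_l2 :: "('a l2 \<times> 'a l2) filter" where
  "uniformity_l2 = (INF e\<in>{0 <..}. principal {(x, y). dist x y < e})"
definition open_l2 :: "'a l2 set \<Rightarrow> bool" where
  "open_l2 U = (\<forall>x\<in>U. eventually (\<lambda>(x', y). x' = x \<longrightarrow> y \<in> U) uniformity)"

instance
proof
  fix x y z :: "'a l2" and a b :: real
  show "x + y + z = x + (y + z)" by transfer (simp add: add.assoc)
  show "x + y = y + x" by transfer (simp add: add.commute)
  show "0 + x = x" by transfer simp
  show "- x + x = 0" by transfer simp
  show "x - y = x + - y" by transfer simp
  show "a *\<^sub>R (x + y) = a *\<^sub>R x + a *\<^sub>R y" by transfer (simp add: scaleR_add_right)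
  show "(a + b) *\<^sub>R x = a *\<^sub>R x + b *\<^sub>R x" by transfer (simp add: scaleR_add_left)
  show "a *\<^sub>R b *\<^sub>R x = (a * b) *\<^sub>R x" by transfer simp
  show "1 *\<^sub>R x = x" by transfer simp
  show "dist x y = norm (x - y)" by (simp add: dist_l2_def)
  show "inner x y = inner y x" by transfer (simp add: inner_commute)
  show "inner (x + y) z = inner x z + inner y z"
    by transfer (simp add: inner_add_left suminf_add H2_inner_summable)
  show "inner (a *\<^sub>R x) y = a * inner x y"
    by transfer (simp add: suminf_mult H2_inner_summable)
  show "0 \<le> inner x x"
    by transfer (auto intro!: suminf_nonneg H2_inner_summable)
  show "inner x x = 0 \<longleftrightarrow> x = 0"
  proof transfer
    fix f :: "nat \<Rightarrow> 'a" assume "f \<in> H2"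
    then have "summable (\<lambda>n. inner (f n) (f n))" using H2_inner_summable by blast
    from suminf_eq_zero_iff[OF this]
    show "((\<Sum>n. inner (f n) (f n)) = 0) = (f = (\<lambda>n. 0))"
      by (auto simp: fun_eq_iff)
  qed
  show "norm x = sqrt (inner x x)" by (simp add: norm_l2_def)
qed (simp_all add: uniformity_l2_def open_l2_def sgn_l2_def)

end

lemma seq_H2: "seq x \<in> H2"
  using seq by auto

lemma seq_mk_l2: "f \<in> H2 \<Longrightarrow> seq (mk_l2 f) = f"
  by (simp add: mk_l2_inverse)

lemma seq_minus: "seq (x - y) n = seq x n - seq y n"
  by transfer simp

lemma seq_plus: "seq (x + y) n = seq x n + seq y n"
  by transfer simp

lemma seq_scaleR: "seq (c *\<^sub>R x) n = c *\<^sub>R seq x n"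
  by transfer simp

lemma inner_l2_seq: "inner x y = (\<Sum>n. inner (seq x n) (seq y n))"
  by transfer simp

lemma norm_l2_sq: "(norm x)\<^sup>2 = (\<Sum>n. (norm (seq x n))\<^sup>2)"
  by (simp add: power2_norm_eq_inner inner_l2_seq)

lemma partial_energy_le_norm: "(\<Sum>n<P. (norm (seq x n))\<^sup>2) \<le> (norm x)\<^sup>2"
  unfolding norm_l2_sq
  by (rule sum_le_suminf) (use seq_H2[of x] in \<open>auto simp: H2_def\<close>)

lemma norm_seq_le: "norm (seq x n) \<le> norm x"
proof -
  have "(norm (seq x n))\<^sup>2 \<le> (\<Sum>i<Suc n. (norm (seq x i))\<^sup>2)"
    by (simp add: sum_nonneg)
  also have "\<dots> \<le> (norm x)\<^sup>2"
    by (rule partial_energy_le_norm)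
  finally show ?thesis
    by (simp add: power2_le_iff_abs_le)
qed

lemma seq_inject_iff: "x = y \<longleftrightarrow> seq x = seq y"
  by (simp add: seq_inject)

lemma mk_l2_add: "p \<in> H2 \<Longrightarrow> q \<in> H2 \<Longrightarrow> mk_l2 p + mk_l2 q = mk_l2 (\<lambda>j. p j + q j)"
  by (simp add: seq_inject_iff fun_eq_iff seq_plus seq_mk_l2 H2_add)

lemma mk_l2_scaleR: "p \<in> H2 \<Longrightarrow> c *\<^sub>R mk_l2 p = mk_l2 (\<lambda>j. c *\<^sub>R p j)"
  by (simp add: seq_inject_iff fun_eq_iff seq_scaleR seq_mk_l2 H2_scale)

lemma inner_mk_l2: "p \<in> H2 \<Longrightarrow> inner x (mk_l2 p) = (\<Sum>n. inner (seq x n) (p n))"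
  by (simp add: inner_l2_seq seq_mk_l2)

lemma norm_mk_l2_diff:
  assumes "p \<in> H2" "q \<in> H2"
  shows "norm (mk_l2 p - mk_l2 q) = H2dist p q"
proof -
  have "(norm (mk_l2 p - mk_l2 q))\<^sup>2 = (\<Sum>n. (norm (p n - q n))\<^sup>2)"
    using assms by (simp add: norm_l2_sq seq_minus seq_mk_l2)
  then show ?thesis
    unfolding H2dist_def by (metis norm_ge_zero real_sqrt_unique)
qed

lemma l2_Cauchy_coordinate:
  fixes X :: "nat \<Rightarrow> 'a::real_inner l2"
  assumes "Cauchy X"
  shows "Cauchy (\<lambda>i. seq (X i) n)"
proof (rule CauchyI)
  fix e :: real
  assume "0 < e"
  then obtain M where "\<forall>i\<ge>M. \<forall>j\<ge>M. norm (X i - X j) < e"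
    using CauchyD[OF assms] by blast
  then show "\<exists>M. \<forall>i\<ge>M. \<forall>j\<ge>M. norm (seq (X i) n - seq (X j) n) < e"
    using norm_seq_le[of "X _ - X _" n] by (metis seq_minus order.strict_trans1)
qed

text \<open>Fatou's argument: for a Cauchy sequence with coordinatewise limit L, the partial
  energies of X i - L are limits of partial energies of X i - X j, so eventually X i - L is
  square-summable with small energy.\<close>
lemma l2_Cauchy_energy_bound:
  fixes X :: "nat \<Rightarrow> 'a::real_inner l2"
  assumes C: "Cauchy X" and L: "\<And>n. (\<lambda>i. seq (X i) n) \<longlonglongrightarrow> L n" and "0 < e"
  shows "\<exists>M. \<forall>i\<ge>M. (\<lambda>n. seq (X i) n - L n) \<in> H2 \<and> (\<Sum>n. (norm (seq (X i) n - L n))\<^sup>2) \<le> e\<^sup>2"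
proof -
  obtain M where M: "\<And>i j. i \<ge> M \<Longrightarrow> j \<ge> M \<Longrightarrow> norm (X i - X j) < e"
    using CauchyD[OF C \<open>0 < e\<close>] by blast
  have "(\<Sum>n<P. (norm (seq (X i) n - L n))\<^sup>2) \<le> e\<^sup>2" if "i \<ge> M" for i P
  proof (rule LIMSEQ_le_const2)
    show "(\<lambda>j. \<Sum>n<P. (norm (seq (X i) n - seq (X j) n))\<^sup>2)
            \<longlonglongrightarrow> (\<Sum>n<P. (norm (seq (X i) n - L n))\<^sup>2)"
      by (intro tendsto_intros L)
    have "(\<Sum>n<P. (norm (seq (X i) n - seq (X j) n))\<^sup>2) \<le> e\<^sup>2" if "j \<ge> M" for j
      using partial_energy_le_norm[where P=P and x="X i - X j"] M[OF \<open>i \<ge> M\<close> that]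
        power_mono[of "norm (X i - X j)" e 2]
      by (simp add: seq_minus)
    then show "\<exists>N. \<forall>j\<ge>N. (\<Sum>n<P. (norm (seq (X i) n - seq (X j) n))\<^sup>2) \<le> e\<^sup>2"
      by blast
  qed
  then show ?thesis
    using H2_of_bounded_partial_sums by (metis (no_types))
qed

text \<open>Completeness (Riesz--Fischer): the coordinatewise limit of a Cauchy sequence lies in
  H2 and is its limit in norm.\<close>
instance l2 :: ("{real_inner,complete_space}") complete_space
proof
  fix X :: "nat \<Rightarrow> 'a l2"
  assume C: "Cauchy X"
  define L where "L n = lim (\<lambda>i. seq (X i) n)" for n
  have L: "(\<lambda>i. seq (X i) n) \<longlonglongrightarrow> L n" for n
    using l2_Cauchy_coordinate[OF C] unfolding L_def
    by (simp add: Cauchy_convergent_iff convergent_LIMSEQ_iff)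
  note tail = l2_Cauchy_energy_bound[OF C L]
  obtain M1 where "(\<lambda>n. seq (X M1) n - L n) \<in> H2"
    using tail[of 1] by auto
  from H2_diff[OF seq_H2[of "X M1"] this] have LH: "L \<in> H2"
    by simp
  have "X \<longlonglongrightarrow> mk_l2 L"
  proof (rule LIMSEQ_I)
    fix r :: real
    assume "0 < r"
    then obtain M where M: "\<And>i. i \<ge> M \<Longrightarrow> (\<Sum>n. (norm (seq (X i) n - L n))\<^sup>2) \<le> (r/2)\<^sup>2"
      using tail[of "r/2"] by auto
    have "norm (X i - mk_l2 L) < r" if "i \<ge> M" for i
    proof -
      have "(norm (X i - mk_l2 L))\<^sup>2 \<le> (r/2)\<^sup>2"
        using M[OF that] by (simp add: norm_l2_sq seq_minus seq_mk_l2[OF LH])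
      then show ?thesis
        using \<open>0 < r\<close> by (simp add: power2_le_iff_abs_le)
    qed
    then show "\<exists>no. \<forall>n\<ge>no. norm (X n - mk_l2 L) < r"
      by blast
  qed
  then show "convergent X"
    by (auto simp: convergent_def)
qed

section \<open>Separation from a subspace in a Hilbert space\<close>

text \<open>If the quadratic 2 t a + t^2 Q is nonnegative for every real t, its linear
  coefficient a vanishes (evaluate at t = -a/(Q+1)).\<close>
lemma quadratic_nonneg_imp_linear_zero:
  fixes a Q :: real
  assumes "Q \<ge> 0" and nonneg: "\<And>t. 0 \<le> 2 * t * a + t\<^sup>2 * Q"
  shows "a = 0"
proof (rule ccontr)
  assume "a \<noteq> 0"
  define t where "t = - a / (Q + 1)"
  have Q1: "Q + 1 > 0"
    using assms by simp
  have "0 \<le> (2 * t * a + t\<^sup>2 * Q) * (Q + 1)\<^sup>2"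
    using nonneg[of t] by simp
  also have "\<dots> = 2 * a * (t * (Q + 1)) * (Q + 1) + Q * (t * (Q + 1))\<^sup>2"
    by (simp add: power2_eq_square algebra_simps)
  also have "t * (Q + 1) = - a"
    unfolding t_def using Q1 by simp
  also have "2 * a * (- a) * (Q + 1) + Q * (- a)\<^sup>2 = a\<^sup>2 * (- Q - 2)"
    by (simp add: power2_eq_square algebra_simps)
  finally have "0 \<le> a\<^sup>2 * (- Q - 2)" .
  moreover have "a\<^sup>2 > 0"
    using \<open>a \<noteq> 0\<close> by simp
  ultimately show False
    using \<open>Q \<ge> 0\<close> by (simp add: zero_le_mult_iff)
qed

lemma orthogonal_if_norm_minimal:
  fixes h q :: "'b::real_inner"
  assumes "\<And>t. norm h \<le> norm (h + t *\<^sub>R q)"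
  shows "inner h q = 0"
proof (rule quadratic_nonneg_imp_linear_zero[where Q = "(norm q)\<^sup>2"])
  fix t :: real
  have "(norm h)\<^sup>2 \<le> (norm (h + t *\<^sub>R q))\<^sup>2"
    using assms[of t] by (simp add: power_mono)
  also have "\<dots> = (norm h)\<^sup>2 + 2 * t * inner h q + t\<^sup>2 * (norm q)\<^sup>2"
    unfolding power2_norm_eq_inner
    by (simp add: inner_add_left inner_add_right inner_commute power2_eq_square algebra_simps)
  finally show "0 \<le> 2 * t * inner h q + t\<^sup>2 * (norm q)\<^sup>2"
    by simp
qed simp

text \<open>Parallelogram law: a minimizing sequence for the distance from w to a subspace
  is a Cauchy sequence, since the midpoint of two approximants lies in the subspace.\<close>
lemma minimizing_sequence_Cauchy:
  fixes w :: "'b::real_inner"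
  assumes S: "subspace S" and P: "\<And>i. P i \<in> S"
    and lower: "\<And>p. p \<in> S \<Longrightarrow> D \<le> (norm (w - p))\<^sup>2"
    and approx: "\<And>i. (norm (w - P i))\<^sup>2 \<le> D + inverse (real (Suc i))"
  shows "Cauchy (\<lambda>i. w - P i)"
proof (rule CauchyI)
  define H where "H i = w - P i" for i
  have close: "(norm (H i - H j))\<^sup>2 \<le> 2 * inverse (real (Suc i)) + 2 * inverse (real (Suc j))"
    for i j
  proof -
    have "(1/2) *\<^sub>R (P i + P j) \<in> S"
      using S P by (simp add: subspace_add subspace_scale)
    from lower[OF this] have "D \<le> (norm ((1/2) *\<^sub>R (H i + H j)))\<^sup>2"
      by (simp add: H_def algebra_simps scaleR_diff_right flip: scaleR_2)
    then have "4 * D \<le> (norm (H i + H j))\<^sup>2"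
      by (simp add: power2_eq_square)
    moreover have "(norm (H i - H j))\<^sup>2 + (norm (H i + H j))\<^sup>2
                   = 2 * (norm (H i))\<^sup>2 + 2 * (norm (H j))\<^sup>2"
      by (simp add: power2_norm_eq_inner inner_diff_left inner_diff_right
          inner_add_left inner_add_right inner_commute)
    ultimately show ?thesis
      using approx[of i] approx[of j] by (simp add: H_def)
  qed
  fix r :: real
  assume "0 < r"
  obtain M where M: "inverse (real (Suc M)) < r\<^sup>2 / 4"
    using reals_Archimedean[of "r\<^sup>2 / 4"] \<open>0 < r\<close> by auto
  have "norm (H i - H j) < r" if "i \<ge> M" "j \<ge> M" for i j
  proof -
    have "inverse (real (Suc i)) \<le> inverse (real (Suc M))"
         "inverse (real (Suc j)) \<le> inverse (real (Suc M))"
      using that by (auto simp: field_simps)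
    then have "(norm (H i - H j))\<^sup>2 < r\<^sup>2"
      using close[of i j] M by linarith
    then show ?thesis
      using \<open>0 < r\<close> by (simp add: power_less_imp_less_base)
  qed
  then show "\<exists>M. \<forall>i\<ge>M. \<forall>j\<ge>M. norm ((w - P i) - (w - P j)) < r"
    unfolding H_def by blast
qed

text \<open>The limit h of residuals w - P i along a minimizing sequence realises the distance D
  and cannot be shortened by moving within S, hence is orthogonal to S.\<close>
lemma minimizing_limit_orthogonal:
  fixes w :: "'b::real_inner"
  assumes S: "subspace S" and P: "\<And>i. P i \<in> S"
    and lower: "\<And>p. p \<in> S \<Longrightarrow> D \<le> (norm (w - p))\<^sup>2"
    and lim: "(\<lambda>i. w - P i) \<longlonglongrightarrow> h" and hD: "(norm h)\<^sup>2 = D" and "q \<in> S"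
  shows "inner h q = 0"
proof (rule orthogonal_if_norm_minimal)
  fix t :: real
  have "D \<le> (norm (h + t *\<^sub>R q))\<^sup>2"
  proof (rule LIMSEQ_le_const)
    show "(\<lambda>i. (norm ((w - P i) + t *\<^sub>R q))\<^sup>2) \<longlonglongrightarrow> (norm (h + t *\<^sub>R q))\<^sup>2"
      by (intro tendsto_intros lim)
    have "P i - t *\<^sub>R q \<in> S" for i
      using S P \<open>q \<in> S\<close> by (simp add: subspace_diff subspace_scale)
    from lower[OF this] show "\<exists>N. \<forall>i\<ge>N. D \<le> (norm ((w - P i) + t *\<^sub>R q))\<^sup>2"
      by (simp add: algebra_simps)
  qed
  then have "(norm h)\<^sup>2 \<le> (norm (h + t *\<^sub>R q))\<^sup>2"
    using hD by simp
  then show "norm h \<le> norm (h + t *\<^sub>R q)"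
    by (rule power2_le_imp_le) simp
qed

text \<open>The vector is the residual
  w minus the orthogonal projection of w onto the closure of S.\<close>
lemma subspace_separation:
  fixes w :: "'b::{real_inner,complete_space}"
  assumes S: "subspace S" and "0 < e" and far: "\<And>p. p \<in> S \<Longrightarrow> e \<le> norm (w - p)"
  shows "\<exists>h. (\<forall>q\<in>S. inner h q = 0) \<and> inner h w \<noteq> 0"
proof -
  define D where "D = (INF p\<in>S. (norm (w - p))\<^sup>2)"
  have "0 \<in> S"
    using S by (rule subspace_0)
  then have ne: "S \<noteq> {}"
    by blast
  have bdd: "bdd_below ((\<lambda>p. (norm (w - p))\<^sup>2) ` S)"
    by (rule bdd_belowI[where m = 0]) auto
  have lower: "D \<le> (norm (w - p))\<^sup>2" if "p \<in> S" for p
    unfolding D_def using bdd that by (rule cINF_lower)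
  have "e\<^sup>2 \<le> D"
    unfolding D_def using ne far \<open>0 < e\<close> by (intro cINF_greatest) (auto intro: power_mono)
  have "\<exists>p\<in>S. (norm (w - p))\<^sup>2 < D + inverse (real (Suc i))" for i
    using cINF_less_iff[OF ne bdd, of "D + inverse (real (Suc i))"] unfolding D_def by auto
  then obtain P where P: "\<And>i. P i \<in> S" "\<And>i. (norm (w - P i))\<^sup>2 < D + inverse (real (Suc i))"
    by metis
  have "Cauchy (\<lambda>i. w - P i)"
    using P by (intro minimizing_sequence_Cauchy[OF S _ lower]) (auto simp: less_imp_le)
  then obtain h where lim: "(\<lambda>i. w - P i) \<longlonglongrightarrow> h"
    using Cauchy_convergent_iff convergent_def by blast
  have "(\<lambda>i. (norm (w - P i))\<^sup>2) \<longlonglongrightarrow> D"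
  proof (rule tendsto_sandwich[where f = "\<lambda>i. D" and h = "\<lambda>i. D + inverse (real (Suc i))"])
    show "\<forall>\<^sub>F i in sequentially. D \<le> (norm (w - P i))\<^sup>2"
      using lower[OF P(1)] by simp
    show "\<forall>\<^sub>F i in sequentially. (norm (w - P i))\<^sup>2 \<le> D + inverse (real (Suc i))"
      using P(2) by (simp add: less_imp_le)
  qed (use LIMSEQ_inverse_real_of_nat_add[of D] in auto)
  moreover have "(\<lambda>i. (norm (w - P i))\<^sup>2) \<longlonglongrightarrow> (norm h)\<^sup>2"
    by (intro tendsto_intros lim)
  ultimately have hD: "(norm h)\<^sup>2 = D"
    using LIMSEQ_unique by blast
  have orth: "inner h q = 0" if "q \<in> S" for q
    using S P(1) lower lim hD that by (rule minimizing_limit_orthogonal)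
  have "inner h w = inner h (w - P i)" for i
    using orth[OF P(1)] by (simp add: inner_diff_right)
  moreover have "(\<lambda>i. inner h (w - P i)) \<longlonglongrightarrow> inner h h"
    by (intro tendsto_intros lim)
  ultimately have "inner h w = (norm h)\<^sup>2"
    by (simp add: LIMSEQ_const_iff power2_norm_eq_inner)
  moreover have "0 < e\<^sup>2"
    using \<open>0 < e\<close> by simp
  ultimately show ?thesis
    using orth hD \<open>e\<^sup>2 \<le> D\<close> by (intro exI[of _ h]) auto
qed

section \<open>The complex structure and cyclic subspaces of the backward shift\<close>

lemma bshift_pow: "(bshift ^^ q) g j = g (j + q)"
  by (induction q arbitrary: j) (simp_all add: bshift_def)

lemma cscale_add: "cscale J (c1 + c2) y = cscale J c1 y + cscale J c2 y"
  by (simp add: cscale_def scaleR_add_left)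

lemma cscale_zero [simp]: "cscale J 0 y = 0"
  by (simp add: cscale_def)

lemma cscale_one: "cscale J 1 y = y"
  by (simp add: cscale_def)

lemma cscale_i: "cscale J \<i> y = J y"
  by (simp add: cscale_def)

lemma cscale_of_real: "cscale J (complex_of_real r * c) y = r *\<^sub>R cscale J c y"
  by (simp add: cscale_def scaleR_add_right)

context
  fixes J :: "'a::real_inner \<Rightarrow> 'a"
  assumes cs: "complex_structure J"
begin

lemma J_add: "J (x + y) = J x + J y" and J_J: "J (J x) = - x" and J_norm: "norm (J x) = norm x"
  using cs by (auto simp: complex_structure_def linear_iff)

text \<open>A real-linear isometry preserves inner products (polarization).\<close>
lemma J_inner: "inner (J x) (J y) = inner x y"
proof -
  have "inner (J x + J y) (J x + J y) = inner (x + y) (x + y)"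
    using J_norm[of "x + y"] by (simp add: J_add flip: power2_norm_eq_inner)
  moreover have "inner (J x) (J x) = inner x x" "inner (J y) (J y) = inner y y"
    using J_norm[of x] J_norm[of y] by (simp_all flip: power2_norm_eq_inner)
  ultimately show ?thesis
    by (simp add: inner_add_left inner_add_right inner_commute)
qed

lemma J_skew: "inner (J x) y = - inner x (J y)"
  using J_inner[of "J x" y] by (simp add: J_J)

lemma J_H2: "v \<in> H2 \<Longrightarrow> (\<lambda>j. J (v j)) \<in> H2"
  by (simp add: H2_def J_norm)

lemma cscale_H2: "v \<in> H2 \<Longrightarrow> (\<lambda>j. cscale J c (v j)) \<in> H2"
  unfolding cscale_def by (intro H2_add H2_scale J_H2)

lemma norm_cscale: "(norm (cscale J c x))\<^sup>2 = (cmod c)\<^sup>2 * (norm x)\<^sup>2"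
proof -
  have "inner x (J x) = 0"
    using J_skew[of x x] by (simp add: inner_commute)
  then have "(norm (cscale J c x))\<^sup>2 = (Re c)\<^sup>2 * inner x x + (Im c)\<^sup>2 * inner (J x) (J x)"
    unfolding power2_norm_eq_inner cscale_def
    by (simp add: inner_add_left inner_add_right inner_commute power2_eq_square algebra_simps)
  then show ?thesis
    by (simp add: J_inner cmod_power2 power2_norm_eq_inner algebra_simps)
qed

lemma shift_span_H2:
  assumes g: "g \<in> H2" and p: "p \<in> shift_span J g"
  shows "p \<in> H2"
proof -
  obtain c M where p_eq: "p = (\<lambda>j. \<Sum>n<M. cscale J (c n) ((bshift ^^ n) g j))"
    using p by (auto simp: shift_span_def)
  have "(\<lambda>j. \<Sum>n<M. cscale J (c n) ((bshift ^^ n) g j)) \<in> H2"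
  proof (induction M)
    case 0
    then show ?case
      using H2_zero by simp
  next
    case (Suc M)
    have "(\<lambda>j. (bshift ^^ M) g j) \<in> H2"
      using H2_shift[OF g] by (simp add: bshift_pow)
    from H2_add[OF Suc cscale_H2[OF this]] show ?case
      by simp
  qed
  then show ?thesis
    using p_eq by simp
qed

end

lemma cscale_sum_pad:
  fixes M M' :: nat
  assumes "M \<le> M'"
  shows "(\<Sum>n<M. cscale J (c n) (v n)) = (\<Sum>n<M'. cscale J (if n < M then c n else 0) (v n))"
  by (rule sum.mono_neutral_cong_left) (use assms in auto)

lemma shift_span_add:
  assumes "p \<in> shift_span J g" "q \<in> shift_span J g"
  shows "(\<lambda>j. p j + q j) \<in> shift_span J g"
proof -
  obtain c1 M1 where p: "p = (\<lambda>j. \<Sum>n<M1. cscale J (c1 n) ((bshift ^^ n) g j))"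
    using assms(1) by (auto simp: shift_span_def)
  obtain c2 M2 where q: "q = (\<lambda>j. \<Sum>n<M2. cscale J (c2 n) ((bshift ^^ n) g j))"
    using assms(2) by (auto simp: shift_span_def)
  define M where "M = max M1 M2"
  define c where "c n = (if n < M1 then c1 n else 0) + (if n < M2 then c2 n else 0)" for n
  have "p j + q j = (\<Sum>n<M. cscale J (c n) ((bshift ^^ n) g j))" for j
    unfolding p q c_def cscale_add sum.distrib
    by (simp add: cscale_sum_pad[of M1 M] cscale_sum_pad[of M2 M] M_def)
  then show ?thesis
    unfolding shift_span_def mem_Collect_eq by blast
qed

lemma shift_span_scaleR:
  assumes "p \<in> shift_span J g"
  shows "(\<lambda>j. r *\<^sub>R p j) \<in> shift_span J g"
proof -
  obtain c M where p: "p = (\<lambda>j. \<Sum>n<M. cscale J (c n) ((bshift ^^ n) g j))"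
    using assms by (auto simp: shift_span_def)
  show ?thesis
    unfolding shift_span_def mem_Collect_eq
  proof (intro exI)
    show "(\<lambda>j. r *\<^sub>R p j)
          = (\<lambda>j. \<Sum>n<M. cscale J (complex_of_real r * c n) ((bshift ^^ n) g j))"
      by (simp add: p cscale_of_real scaleR_sum_right)
  qed
qed

lemma shift_span_single: "(\<lambda>j. cscale J c ((bshift ^^ q) g j)) \<in> shift_span J g"
proof -
  define c' where "c' n = (if n = q then c else 0)" for n
  show ?thesis
    unfolding shift_span_def mem_Collect_eq
  proof (intro exI ext)
    fix j
    show "cscale J c ((bshift ^^ q) g j) = (\<Sum>n<Suc q. cscale J (c' n) ((bshift ^^ n) g j))"
      by (subst sum.mono_neutral_right[of "{..<Suc q}" "{q}"]) (auto simp: c'_def)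
  qed
qed

lemma shift_span_subspace:
  assumes cs: "complex_structure J" and g: "g \<in> H2"
  shows "subspace (mk_l2 ` shift_span J g)"
  unfolding subspace_def
proof (intro conjI ballI allI)
  have "(\<lambda>j. cscale J 0 ((bshift ^^ 0) g j)) \<in> shift_span J g"
    by (rule shift_span_single)
  then show "0 \<in> mk_l2 ` shift_span J g"
    by (auto simp: zero_l2_def)
next
  fix x y
  assume "x \<in> mk_l2 ` shift_span J g" "y \<in> mk_l2 ` shift_span J g"
  then obtain p q where pq: "p \<in> shift_span J g" "q \<in> shift_span J g"
    and "x = mk_l2 p" "y = mk_l2 q"
    by blast
  then have "x + y = mk_l2 (\<lambda>j. p j + q j)"
    using mk_l2_add[OF shift_span_H2[OF cs g] shift_span_H2[OF cs g]] by simp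
  moreover have "(\<lambda>j. p j + q j) \<in> shift_span J g"
    using pq by (rule shift_span_add)
  ultimately show "x + y \<in> mk_l2 ` shift_span J g"
    by blast
next
  fix r :: real and x
  assume "x \<in> mk_l2 ` shift_span J g"
  then obtain p where p: "p \<in> shift_span J g" and "x = mk_l2 p"
    by blast
  then have "r *\<^sub>R x = mk_l2 (\<lambda>j. r *\<^sub>R p j)"
    using mk_l2_scaleR[OF shift_span_H2[OF cs g]] by simp
  moreover have "(\<lambda>j. r *\<^sub>R p j) \<in> shift_span J g"
    using p by (rule shift_span_scaleR)
  ultimately show "r *\<^sub>R x \<in> mk_l2 ` shift_span J g"
    by blast
qed

section \<open>Lacunary sequences of exponents\<close>

locale lacunary =
  fixes n :: "nat \<Rightarrow> nat" and d :: real
  assumes ratio_gt_1: "d > 1"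
    and first_pos: "n 0 \<ge> 1"
    and ratio: "\<forall>k. real (n (Suc k)) \<ge> d * real (n k)"
begin

lemma n_pos: "1 \<le> real (n k)"
proof (induction k)
  case 0
  then show ?case
    using first_pos by simp
next
  case (Suc k)
  then have "real (n k) \<le> d * real (n k)"
    using ratio_gt_1 by simp
  then show ?case
    using Suc ratio by (meson order_trans)
qed

lemma n_growth: "d ^ q * real (n k) \<le> real (n (k + q))"
proof (induction q)
  case (Suc q)
  have "d ^ Suc q * real (n k) \<le> d * real (n (k + q))"
    using Suc ratio_gt_1 by simp
  also have "\<dots> \<le> real (n (Suc (k + q)))"
    using ratio by blast
  finally show ?case
    by simp
qed simp

lemma n_ratio_le:
  assumes "k < j"
  shows "d * real (n k) \<le> real (n j)"
proof -
  have "d * real (n k) \<le> d ^ (j - k) * real (n k)"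
    using assms ratio_gt_1 n_pos[of k] power_increasing[of 1 "j - k" d] by simp
  also have "\<dots> \<le> real (n j)"
    using n_growth[of "j - k" k] assms by simp
  finally show ?thesis .
qed

lemma n_strict_mono: "strict_mono n"
  unfolding strict_mono_def
proof (intro allI impI)
  fix k j :: nat
  assume "k < j"
  then have "d * real (n k) \<le> real (n j)"
    by (rule n_ratio_le)
  moreover have "real (n k) < d * real (n k)"
    using n_pos[of k] ratio_gt_1 by simp
  ultimately show "n k < n j"
    by simp
qed

lemma n_ge_index: "k \<le> n k"
  by (rule seq_suble[OF n_strict_mono])

lemma frequency_gap:
  assumes "n k + t = n j" "0 < t"
  shows "(d - 1) * real k \<le> real t"
proof -
  have "n k < n j"
    using assms by simp
  then have "k < j"
    using n_strict_mono by (simp add: strict_mono_less)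
  then have "(d - 1) * real (n k) \<le> real t"
    using n_ratio_le[of k j] assms(1) by (simp add: algebra_simps flip: of_nat_add)
  moreover have "(d - 1) * real k \<le> (d - 1) * real (n k)"
    using n_ge_index[of k] ratio_gt_1 by simp
  ultimately show ?thesis
    by linarith
qed

lemma frequency_window_empty:
  "\<exists>K0. \<forall>k\<ge>K0. m \<le> n k \<and> (\<forall>i<m. i + (n k - m) \<notin> range n)"
proof -
  obtain M where "real m / (d - 1) < real M"
    using reals_Archimedean2 by blast
  then have M: "real m < (d - 1) * real M"
    using ratio_gt_1 by (simp add: pos_divide_less_eq mult.commute)
  have "m \<le> n k \<and> (\<forall>i<m. i + (n k - m) \<notin> range n)" if "Suc M \<le> k" for k
  proof -
    have "(d - 1) * real M \<le> (d - 1) * real (k - 1)"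
      using that ratio_gt_1 by simp
    moreover have "n (k - 1) < n k"
      using n_strict_mono that by (simp add: strict_mono_less)
    then have "(d - 1) * real (k - 1) \<le> real (n k - n (k - 1))"
      by (intro frequency_gap) auto
    ultimately have gap: "n (k - 1) + m < n k"
      using M by linarith
    have "i + (n k - m) \<notin> range n" if "i < m" for i
    proof
      assume "i + (n k - m) \<in> range n"
      then obtain j where j: "n j = i + (n k - m)"
        by auto
      then have "n (k - 1) < n j" "n j < n k"
        using gap \<open>i < m\<close> by auto
      then have "k - 1 < j" "j < k"
        using n_strict_mono by (auto simp: strict_mono_less)
      then show False
        by simp
    qed
    with gap show ?thesis
      by simp
  qed
  then show ?thesis
    by blast
qed

lemma frequency_window_card:
  assumes C: "d / (d - 1) < d ^ C" and "0 < t"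
  shows "finite {j. t \<le> n j \<and> real (n j) * (d - 1) \<le> d * real t}"
    and "card {j. t \<le> n j \<and> real (n j) * (d - 1) \<le> d * real t} \<le> C"
proof -
  define W where "W = {j. t \<le> n j \<and> real (n j) * (d - 1) \<le> d * real t}"
  have "finite W \<and> card W \<le> C"
  proof (cases "W = {}")
    case False
    define j0 where "j0 = (LEAST j. j \<in> W)"
    have "j0 \<in> W"
      using False unfolding j0_def by (metis LeastI ex_in_conv)
    have "W \<subseteq> {j0..<j0 + C}"
    proof
      fix j
      assume "j \<in> W"
      then have "j0 \<le> j"
        unfolding j0_def by (rule Least_le)
      moreover have "j < j0 + C"
      proof (rule ccontr)
        assume "\<not> j < j0 + C"
        then have "d ^ C \<le> d ^ (j - j0)"
          using ratio_gt_1 by (intro power_increasing) auto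
        have "d / (d - 1) * real t < d ^ C * real t"
          using mult_strict_right_mono[OF C] \<open>0 < t\<close> by simp
        also have "\<dots> \<le> d ^ C * real (n j0)"
          using \<open>j0 \<in> W\<close> ratio_gt_1 by (simp add: W_def)
        also have "\<dots> \<le> d ^ (j - j0) * real (n j0)"
          using \<open>d ^ C \<le> d ^ (j - j0)\<close> n_pos[of j0] by simp
        also have "\<dots> \<le> real (n j)"
          using n_growth[of "j - j0" j0] \<open>j0 \<le> j\<close> by simp
        also have "\<dots> \<le> d / (d - 1) * real t"
          using \<open>j \<in> W\<close> ratio_gt_1 by (simp add: W_def field_simps)
        finally show False
          by simp
      qed
      ultimately show "j \<in> {j0..<j0 + C}"
        by simp
    qed
    then show ?thesis
      using finite_subset card_mono[of "{j0..<j0 + C}" W] by auto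
  qed simp
  then show "finite W" "card W \<le> C"
    by auto
qed

lemma bounded_representations:
  "\<exists>C. \<forall>t>0. finite {k. n k + t \<in> range n} \<and> card {k. n k + t \<in> range n} \<le> C"
proof -
  obtain C where C: "d / (d - 1) < d ^ C"
    using real_arch_pow[OF ratio_gt_1] by blast
  have "finite {k. n k + t \<in> range n} \<and> card {k. n k + t \<in> range n} \<le> C" if "0 < t" for t
  proof -
    define R where "R = {k. n k + t \<in> range n}"
    define W where "W = {j. t \<le> n j \<and> real (n j) * (d - 1) \<le> d * real t}"
    have image: "(\<lambda>k. n k + t) ` R \<subseteq> n ` W"
    proof
      fix y
      assume "y \<in> (\<lambda>k. n k + t) ` R"
      then obtain k j where kj: "y = n k + t" "n k + t = n j"
        by (auto simp: R_def)
      then have "n k < n j"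
        using \<open>0 < t\<close> by simp
      then have "k < j"
        using n_strict_mono by (simp add: strict_mono_less)
      then have "d * real (n k) \<le> real (n j)"
        by (rule n_ratio_le)
      moreover have "real (n j) = real (n k) + real t"
        using kj(2) by (metis of_nat_add)
      ultimately have "real (n j) * (d - 1) \<le> d * real t"
        by (simp add: algebra_simps)
      then have "j \<in> W"
        using kj(2) by (auto simp: W_def)
      then show "y \<in> n ` W"
        using kj by auto
    qed
    have inj: "inj_on (\<lambda>k. n k + t) R"
      using n_strict_mono by (auto simp: inj_on_def strict_mono_eq)
    have W: "finite W" "card W \<le> C"
      unfolding W_def using frequency_window_card[OF C \<open>0 < t\<close>] by auto
    have "finite R"
      using finite_imageD[OF finite_subset[OF image finite_imageI[OF W(1)]] inj] .
    moreover have "card R \<le> C"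
      using card_image[OF inj] card_mono[OF finite_imageI[OF W(1)] image]
        card_image_le[OF W(1), of n] W(2) by linarith
    ultimately show ?thesis
      by (simp add: R_def)
  qed
  then show ?thesis
    by blast
qed

end

lemma isolated_term_bound:
  fixes g b :: "nat \<Rightarrow> real"
  assumes "g sums 0" and before: "\<And>i. i < m \<Longrightarrow> g i = 0"
    and after: "\<And>i. m < i \<Longrightarrow> \<bar>g i\<bar> \<le> b i"
    and b: "summable b" "\<And>i. 0 \<le> b i"
  shows "\<bar>g m\<bar> \<le> suminf b"
proof -
  define g' where "g' i = (if m < i then g i else 0)" for i
  have "g' = (\<lambda>i. g i - (if i = m then g i else 0))"
  proof
    fix i
    show "g' i = g i - (if i = m then g i else 0)"
      using before[of i] by (cases "i < m"; cases "i = m") (auto simp: g'_def)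
  qed
  then have "g' sums (0 - g m)"
    using sums_diff[OF assms(1) sums_single[of m g]] by simp
  have g'_le: "\<bar>g' i\<bar> \<le> b i" for i
  proof (cases "m < i")
    case True
    then show ?thesis
      using after[OF True] by (simp add: g'_def)
  next
    case False
    then show ?thesis
      using b(2)[of i] by (simp add: g'_def)
  qed
  have abs_g': "summable (\<lambda>i. \<bar>g' i\<bar>)"
    by (rule summable_comparison_test'[OF b(1)]) (simp add: g'_le)
  have "\<bar>g m\<bar> = \<bar>suminf g'\<bar>"
    using \<open>g' sums (0 - g m)\<close> by (simp add: sums_iff)
  also have "\<dots> \<le> (\<Sum>i. \<bar>g' i\<bar>)"
    by (rule summable_rabs[OF abs_g'])
  also have "\<dots> \<le> suminf b"
    using g'_le abs_g' b(1) by (rule suminf_le)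
  finally show ?thesis .
qed

lemma series_Cauchy_Schwarz:
  fixes X Y :: "nat \<Rightarrow> real"
  assumes X: "summable (\<lambda>i. (X i)\<^sup>2)" and Y: "summable (\<lambda>i. (Y i)\<^sup>2)"
  shows "summable (\<lambda>i. X i * Y i)"
    and "(\<Sum>i. X i * Y i)\<^sup>2 \<le> (\<Sum>i. (X i)\<^sup>2) * (\<Sum>i. (Y i)\<^sup>2)"
proof -
  have "X \<in> H2" "Y \<in> H2"
    using X Y by (simp_all add: H2_def)
  then show XY: "summable (\<lambda>i. X i * Y i)"
    using H2_inner_summable by fastforce
  show "(\<Sum>i. X i * Y i)\<^sup>2 \<le> (\<Sum>i. (X i)\<^sup>2) * (\<Sum>i. (Y i)\<^sup>2)"
  proof (rule LIMSEQ_le_const2)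
    show "(\<lambda>L. (\<Sum>i<L. X i * Y i)\<^sup>2) \<longlonglongrightarrow> (\<Sum>i. X i * Y i)\<^sup>2"
      by (intro tendsto_intros summable_LIMSEQ XY)
    have "(\<Sum>i<L. X i * Y i)\<^sup>2 \<le> (\<Sum>i<L. (X i)\<^sup>2) * (\<Sum>i<L. (Y i)\<^sup>2)" for L
      by (rule Cauchy_Schwarz_ineq_sum)
    also have "(\<Sum>i<L. (X i)\<^sup>2) * (\<Sum>i<L. (Y i)\<^sup>2) \<le> (\<Sum>i. (X i)\<^sup>2) * (\<Sum>i. (Y i)\<^sup>2)" for L
      by (intro mult_mono sum_le_suminf X Y sum_nonneg suminf_nonneg) auto
    finally show "\<exists>N. \<forall>L\<ge>N. (\<Sum>i<L. X i * Y i)\<^sup>2 \<le> (\<Sum>i. (X i)\<^sup>2) * (\<Sum>i. (Y i)\<^sup>2)"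
      by blast
  qed
qed

definition tail_energy :: "(nat \<Rightarrow> 'a::real_normed_vector) \<Rightarrow> nat \<Rightarrow> real" where
  "tail_energy h G = (\<Sum>i. if G \<le> i then (norm (h i))\<^sup>2 else 0)"

lemma tail_energy_summable:
  assumes "h \<in> H2"
  shows "summable (\<lambda>i. if G \<le> i then (norm (h i))\<^sup>2 else 0)"
  by (rule summable_comparison_test'[where g = "\<lambda>i. (norm (h i))\<^sup>2"])
    (use assms in \<open>auto simp: H2_def\<close>)

lemma tail_energy_nonneg: "h \<in> H2 \<Longrightarrow> 0 \<le> tail_energy h G"
  unfolding tail_energy_def by (intro suminf_nonneg tail_energy_summable) auto

lemma tail_energy_pos:
  assumes "h \<in> H2" "h G \<noteq> 0"
  shows "0 < tail_energy h G"
proof -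
  have "(norm (h G))\<^sup>2 \<le> tail_energy h G"
    unfolding tail_energy_def
    using sum_le_suminf[OF tail_energy_summable[OF assms(1)], of "{G}" G] by simp
  then show ?thesis
    using assms(2) by (smt (verit) zero_less_power2 norm_eq_zero)
qed

lemma tail_energy_tendsto_0:
  assumes "h \<in> H2"
  shows "tail_energy h \<longlonglongrightarrow> 0"
proof -
  define E where "E = (\<lambda>i. (norm (h i))\<^sup>2)"
  have E: "summable E"
    using assms by (simp add: H2_def E_def)
  have "tail_energy h = (\<lambda>G. suminf E - (\<Sum>i<G. E i))"
  proof
    fix G
    have "(\<lambda>i. E i - (if i < G then E i else 0)) sums (suminf E - (\<Sum>i<G. E i))"
      using sums_diff[OF summable_sums[OF E] sums_If_finite_set[of "{..<G}" E]]
      by (simp add: lessThan_def)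
    moreover have "(\<lambda>i. E i - (if i < G then E i else 0)) = (\<lambda>i. if G \<le> i then (norm (h i))\<^sup>2 else 0)"
      by (auto simp: E_def fun_eq_iff)
    ultimately show "tail_energy h G = suminf E - (\<Sum>i<G. E i)"
      unfolding tail_energy_def by (simp add: sums_iff)
  qed
  moreover have "(\<lambda>G. suminf E - (\<Sum>i<G. E i)) \<longlonglongrightarrow> suminf E - suminf E"
    by (intro tendsto_intros summable_LIMSEQ E)
  ultimately show ?thesis
    by simp
qed

lemma nat_ceiling_at_top:
  assumes "0 < c"
  shows "filterlim (\<lambda>K. nat \<lceil>c * real K\<rceil>) at_top sequentially"
  unfolding filterlim_at_top
proof
  fix Z :: nat
  obtain K1 where "real Z / c < real K1"
    using reals_Archimedean2 by blast
  then have Z: "real Z < c * real K1"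
    using assms by (simp add: pos_divide_less_eq mult.commute)
  have "Z \<le> nat \<lceil>c * real K\<rceil>" if "K1 \<le> K" for K
  proof -
    have "c * real K1 \<le> c * real K"
      using assms that by simp
    also have "\<dots> \<le> real_of_int \<lceil>c * real K\<rceil>"
      by (rule le_of_int_ceiling)
    finally have "int Z \<le> \<lceil>c * real K\<rceil>"
      using Z by linarith
    then show ?thesis
      by linarith
  qed
  then show "\<forall>\<^sub>F K in sequentially. Z \<le> nat \<lceil>c * real K\<rceil>"
    by (auto simp: eventually_sequentially)
qed

section \<open>Coefficients orthogonal to the tail shifts of a lacunary series\<close>

context lacunary
begin

text \<open>The energy of h at the positions i > m that the shift aligning i = m with the
  frequency n k carries into another frequency.\<close>
definition hit_energy :: "(nat \<Rightarrow> 'b::real_normed_vector) \<Rightarrow> nat \<Rightarrow> nat \<Rightarrow> real" where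
  "hit_energy h m k = (\<Sum>i. if m < i \<and> n k + (i - m) \<in> range n then (norm (h i))\<^sup>2 else 0)"

lemma hit_energy_summable:
  assumes "h \<in> H2"
  shows "summable (\<lambda>i. if m < i \<and> n k + (i - m) \<in> range n then (norm (h i))\<^sup>2 else 0)"
  by (rule summable_comparison_test'[where g = "\<lambda>i. (norm (h i))\<^sup>2"])
    (use assms in \<open>auto simp: H2_def\<close>)

text \<open>A position i > m is hit from at most C frequencies n k (counting lemma), and only
  from those with (d - 1) k \<le> i - m (gap lemma); so hits from k \<ge> K occur only at
  positions i \<ge> (d - 1) K.\<close>
lemma hits_at_position:
  fixes e :: real
  assumes C: "\<forall>t>0. finite {k. n k + t \<in> range n} \<and> card {k. n k + t \<in> range n} \<le> C"
    and "0 \<le> e"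
  shows "(\<Sum>k<L. if K \<le> k \<and> m < i \<and> n k + (i - m) \<in> range n then e else 0)
           \<le> (if nat \<lceil>(d - 1) * real K\<rceil> \<le> i then real C * e else 0)"
proof -
  define A where "A = {k \<in> {..<L}. K \<le> k \<and> m < i \<and> n k + (i - m) \<in> range n}"
  have "(\<Sum>k<L. if K \<le> k \<and> m < i \<and> n k + (i - m) \<in> range n then e else 0) = real (card A) * e"
    unfolding A_def by (simp add: sum.If_cases Int_def)
  also have "\<dots> \<le> (if nat \<lceil>(d - 1) * real K\<rceil> \<le> i then real C * e else 0)"
  proof (cases "A = {}")
    case False
    then obtain k where "k \<in> A"
      by auto
    then have "m < i" and "K \<le> k" and "n k + (i - m) \<in> range n"
      by (auto simp: A_def)
    then have "(d - 1) * real k \<le> real (i - m)"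
      using frequency_gap[of k "i - m"] by auto
    moreover have "(d - 1) * real K \<le> (d - 1) * real k"
      using \<open>K \<le> k\<close> ratio_gt_1 by simp
    ultimately have "nat \<lceil>(d - 1) * real K\<rceil> \<le> i"
      using \<open>m < i\<close> by (simp add: ceiling_le_iff nat_le_iff)
    have "A \<subseteq> {k. n k + (i - m) \<in> range n}"
      unfolding A_def by blast
    moreover have "finite {k. n k + (i - m) \<in> range n}"
      and "card {k. n k + (i - m) \<in> range n} \<le> C"
      using C[rule_format, of "i - m"] \<open>m < i\<close> by auto
    ultimately have "card A \<le> C"
      using card_mono le_trans by blast
    then show ?thesis
      using \<open>nat \<lceil>(d - 1) * real K\<rceil> \<le> i\<close> \<open>0 \<le> e\<close> by (simp add: mult_right_mono)
  qed (simp add: \<open>0 \<le> e\<close>)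
  finally show ?thesis .
qed

lemma hit_energy_sum_bound:
  assumes h: "h \<in> H2"
    and C: "\<forall>t>0. finite {k. n k + t \<in> range n} \<and> card {k. n k + t \<in> range n} \<le> C"
  shows "(\<Sum>k<L. if K \<le> k then hit_energy h m k else 0)
           \<le> real C * tail_energy h (nat \<lceil>(d - 1) * real K\<rceil>)"
proof -
  define G where "G = nat \<lceil>(d - 1) * real K\<rceil>"
  define hit where "hit k i = (K \<le> k \<and> m < i \<and> n k + (i - m) \<in> range n)" for k i
  have per_position: "(\<Sum>k<L. if hit k i then (norm (h i))\<^sup>2 else 0)
                      \<le> (if G \<le> i then real C * (norm (h i))\<^sup>2 else 0)" for i
    unfolding hit_def G_def using C by (rule hits_at_position) simp
  have scaled_tail: "(\<lambda>i. if G \<le> i then real C * (norm (h i))\<^sup>2 else 0)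
                    = (\<lambda>i. real C * (if G \<le> i then (norm (h i))\<^sup>2 else 0))"
    by auto
  have "(\<Sum>k<L. if K \<le> k then hit_energy h m k else 0)
        = (\<Sum>k<L. \<Sum>i. if hit k i then (norm (h i))\<^sup>2 else 0)"
    by (intro sum.cong) (auto simp: hit_energy_def hit_def)
  also have "\<dots> = (\<Sum>i. \<Sum>k<L. if hit k i then (norm (h i))\<^sup>2 else 0)"
  proof (rule suminf_sum[symmetric])
    show "summable (\<lambda>i. if hit k i then (norm (h i))\<^sup>2 else 0)" for k
      by (rule summable_comparison_test'[where g = "\<lambda>i. (norm (h i))\<^sup>2"])
        (use h in \<open>auto simp: H2_def\<close>)
  qed
  also have "\<dots> \<le> (\<Sum>i. if G \<le> i then real C * (norm (h i))\<^sup>2 else 0)"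
  proof (rule suminf_le[OF per_position])
    show "summable (\<lambda>i. \<Sum>k<L. if hit k i then (norm (h i))\<^sup>2 else 0)"
    proof (rule summable_comparison_test'[where g = "\<lambda>i. real L * (norm (h i))\<^sup>2"])
      show "summable (\<lambda>i. real L * (norm (h i))\<^sup>2)"
        using h by (simp add: H2_def summable_mult)
      fix i
      have "(\<Sum>k<L. if hit k i then (norm (h i))\<^sup>2 else 0) \<le> (\<Sum>k<L. (norm (h i))\<^sup>2)"
        by (rule sum_mono) simp
      then show "norm (\<Sum>k<L. if hit k i then (norm (h i))\<^sup>2 else 0) \<le> real L * (norm (h i))\<^sup>2"
        by (simp add: sum_nonneg)
    qed
    show "summable (\<lambda>i. if G \<le> i then real C * (norm (h i))\<^sup>2 else 0)"
      unfolding scaled_tail using tail_energy_summable[OF h] by (rule summable_mult)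
  qed
  also have "\<dots> = real C * tail_energy h G"
    unfolding scaled_tail tail_energy_def using tail_energy_summable[OF h] by (rule suminf_mult)
  finally show ?thesis
    by (simp add: G_def)
qed

end

locale lacunary_series = lacunary n d for n :: "nat \<Rightarrow> nat" and d :: real +
  fixes f a :: "nat \<Rightarrow> 'a::real_inner"
  assumes coeff: "\<forall>k. f (n k) = a k"
    and gaps: "\<forall>j. j \<notin> range n \<longrightarrow> f j = 0"
    and f_H2: "f \<in> H2"
begin

lemma sums_along_frequencies:
  assumes "\<And>j. j \<notin> range n \<Longrightarrow> F j = 0"
  shows "(\<lambda>k. F (n k)) sums s \<longleftrightarrow> F sums s"
  using sums_mono_reindex[OF n_strict_mono, of F s] assms by blast

lemma coeff_H2: "a \<in> H2"
proof -
  have "(\<lambda>j. (norm (f j))\<^sup>2) sums (\<Sum>j. (norm (f j))\<^sup>2)"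
    using f_H2 by (simp add: H2_def summable_sums)
  then have "(\<lambda>k. (norm (f (n k)))\<^sup>2) sums (\<Sum>j. (norm (f j))\<^sup>2)"
    using gaps by (subst sums_along_frequencies) auto
  then show ?thesis
    using coeff by (auto simp: H2_def sums_iff)
qed

lemma tail_energy_coeff: "tail_energy a K = tail_energy f (n K)"
proof -
  define F where "F j = (if n K \<le> j then (norm (f j))\<^sup>2 else 0)" for j
  have "F sums tail_energy f (n K)"
    unfolding F_def tail_energy_def using tail_energy_summable[OF f_H2] by (rule summable_sums)
  then have "(\<lambda>k. F (n k)) sums tail_energy f (n K)"
    using gaps by (subst sums_along_frequencies) (auto simp: F_def)
  moreover have "F (n k) = (if K \<le> k then (norm (a k))\<^sup>2 else 0)" for k
    using coeff n_strict_mono by (simp add: F_def strict_mono_less_eq)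
  ultimately show ?thesis
    unfolding tail_energy_def by (simp add: sums_iff)
qed

lemma shifted_tail_le:
  assumes "K \<le> k" "m \<le> n k"
  shows "summable (\<lambda>i. (if m < i then norm (f (i + (n k - m))) else 0)\<^sup>2)"
    and "(\<Sum>i. (if m < i then norm (f (i + (n k - m))) else 0)\<^sup>2) \<le> tail_energy a K"
proof -
  define F where "F j = (if n K \<le> j then (norm (f j))\<^sup>2 else 0)" for j
  have F: "summable F"
    unfolding F_def using tail_energy_summable[OF f_H2] .
  have "n K \<le> n k"
    using assms n_strict_mono by (simp add: strict_mono_less_eq)
  then have le: "(if m < i then norm (f (i + (n k - m))) else 0)\<^sup>2 \<le> F (i + (n k - m))" for i
    using assms by (auto simp: F_def)
  have shifted: "summable (\<lambda>i. F (i + (n k - m)))"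
    using F by (simp add: summable_iff_shift)
  then show "summable (\<lambda>i. (if m < i then norm (f (i + (n k - m))) else 0)\<^sup>2)"
    by (rule summable_comparison_test'[where g = "\<lambda>i. F (i + (n k - m))"]) (simp add: le)
  then have "(\<Sum>i. (if m < i then norm (f (i + (n k - m))) else 0)\<^sup>2) \<le> (\<Sum>i. F (i + (n k - m)))"
    using shifted le by (intro suminf_le) auto
  also have "\<dots> \<le> suminf F"
    using suminf_split_initial_segment[OF F, of "n k - m"] sum_nonneg[of "{..<n k - m}" F]
    by (simp add: F_def)
  also have "\<dots> = tail_energy f (n K)"
    by (simp add: tail_energy_def F_def[abs_def])
  also have "\<dots> = tail_energy a K"
    by (rule tail_energy_coeff[symmetric])
  finally show "(\<Sum>i. (if m < i then norm (f (i + (n k - m))) else 0)\<^sup>2) \<le> tail_energy a K" .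
qed

end

context lacunary_series
begin

text \<open>Let h be orthogonal to the shift of f by p = n k - m,
  which moves the frequency n k to position m, and assume no frequency falls into the window
  [p, n k).  Then the pairing isolates the term (a k, h m), and Cauchy--Schwarz bounds it
  by the tail energy of a from K \<le> k on times the hit energy.\<close>
lemma single_shift_estimate:
  assumes h: "h \<in> H2" and "K \<le> k" and "m \<le> n k"
    and window: "\<And>i. i < m \<Longrightarrow> i + (n k - m) \<notin> range n"
    and orth: "(\<Sum>i. inner (h i) (f (i + (n k - m)))) = 0"
  shows "(inner (a k) (h m))\<^sup>2 \<le> tail_energy a K * hit_energy h m k"
proof -
  define p where "p = n k - m"
  define g where "g i = inner (h i) (f (i + p))" for i
  define X where "X i = (if m < i \<and> n k + (i - m) \<in> range n then norm (h i) else 0)" for i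
  define Y where "Y i = (if m < i then norm (f (i + p)) else 0)" for i
  have X_sq: "(\<lambda>i. (X i)\<^sup>2)
              = (\<lambda>i. if m < i \<and> n k + (i - m) \<in> range n then (norm (h i))\<^sup>2 else 0)"
    by (rule ext, unfold X_def) (simp only: if_distrib[of "\<lambda>x. x\<^sup>2"] zero_power2)
  have X: "summable (\<lambda>i. (X i)\<^sup>2)" "(\<Sum>i. (X i)\<^sup>2) = hit_energy h m k"
    unfolding X_sq hit_energy_def using hit_energy_summable[OF h] by simp_all
  have Y: "summable (\<lambda>i. (Y i)\<^sup>2)" "(\<Sum>i. (Y i)\<^sup>2) \<le> tail_energy a K"
    unfolding Y_def p_def using shifted_tail_le[OF \<open>K \<le> k\<close> \<open>m \<le> n k\<close>] by simp_all
  have "g sums 0"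
    using orth H2_inner_summable[OF h H2_shift[OF f_H2]]
    by (simp add: g_def[abs_def] p_def sums_iff)
  moreover have "g i = 0" if "i < m" for i
    using gaps window[OF that] by (simp add: g_def p_def)
  moreover have "\<bar>g i\<bar> \<le> X i * Y i" if "m < i" for i
  proof (cases "n k + (i - m) \<in> range n")
    case True
    then show ?thesis
      using that Cauchy_Schwarz_ineq2 by (simp add: g_def X_def Y_def)
  next
    case False
    moreover have "i + p = n k + (i - m)"
      using that \<open>m \<le> n k\<close> by (simp add: p_def)
    ultimately have "f (i + p) = 0"
      using gaps by simp
    then show ?thesis
      by (simp add: g_def X_def Y_def)
  qed
  ultimately have "\<bar>g m\<bar> \<le> (\<Sum>i. X i * Y i)"
    using series_Cauchy_Schwarz(1)[OF X(1) Y(1)]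
    by (intro isolated_term_bound) (auto simp: X_def Y_def)
  then have "(g m)\<^sup>2 \<le> (\<Sum>i. X i * Y i)\<^sup>2"
    by (metis abs_ge_zero power2_abs power_mono)
  also have "\<dots> \<le> (\<Sum>i. (X i)\<^sup>2) * (\<Sum>i. (Y i)\<^sup>2)"
    by (rule series_Cauchy_Schwarz(2)[OF X(1) Y(1)])
  also have "\<dots> \<le> hit_energy h m k * tail_energy a K"
    unfolding X(2) using Y(2) suminf_nonneg[OF X(1)] X(2) by (intro mult_left_mono) simp_all
  finally show ?thesis
    using coeff \<open>m \<le> n k\<close> by (simp add: g_def p_def inner_commute mult.commute)
qed

text \<open>If h is orthogonal to every shift S^{*p} f with p \<ge> N, the single-shift estimate
  applies to all large k, since the windows below the frequencies eventually become empty.\<close>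
lemma coefficient_estimate:
  assumes h: "h \<in> H2" and orth: "\<forall>p\<ge>N. (\<Sum>i. inner (h i) (f (i + p))) = 0"
  shows "\<exists>K0. \<forall>K k. K0 \<le> K \<longrightarrow> K \<le> k
           \<longrightarrow> (inner (a k) (h m))\<^sup>2 \<le> tail_energy a K * hit_energy h m k"
proof -
  obtain K1 where window: "\<And>k. K1 \<le> k \<Longrightarrow> m \<le> n k \<and> (\<forall>i<m. i + (n k - m) \<notin> range n)"
    using frequency_window_empty[of m] by blast
  have "(inner (a k) (h m))\<^sup>2 \<le> tail_energy a K * hit_energy h m k"
    if "max K1 (N + m) \<le> K" "K \<le> k" for K k
  proof (rule single_shift_estimate[OF h \<open>K \<le> k\<close>])
    show "m \<le> n k" "\<And>i. i < m \<Longrightarrow> i + (n k - m) \<notin> range n"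
      using window[of k] that by auto
    have "N \<le> n k - m"
      using that n_ge_index[of k] by linarith
    then show "(\<Sum>i. inner (h i) (f (i + (n k - m)))) = 0"
      using orth by blast
  qed
  then show ?thesis
    by blast
qed

lemma orthogonal_coefficients_bound:
  assumes h: "h \<in> H2" and orth: "\<forall>p\<ge>N. (\<Sum>i. inner (h i) (f (i + p))) = 0"
  shows "\<exists>K0 C. \<forall>K\<ge>K0. \<forall>L. (\<Sum>k<L. if K \<le> k then (inner (a k) (h m))\<^sup>2 else 0)
           \<le> tail_energy a K * (real C * tail_energy h (nat \<lceil>(d - 1) * real K\<rceil>))"
proof -
  obtain K0 where K0: "\<And>K k. K0 \<le> K \<Longrightarrow> K \<le> k
                        \<Longrightarrow> (inner (a k) (h m))\<^sup>2 \<le> tail_energy a K * hit_energy h m k"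
    using coefficient_estimate[OF h orth] by blast
  obtain C where C: "\<forall>t>0. finite {k. n k + t \<in> range n} \<and> card {k. n k + t \<in> range n} \<le> C"
    using bounded_representations by blast
  have "(\<Sum>k<L. if K \<le> k then (inner (a k) (h m))\<^sup>2 else 0)
        \<le> tail_energy a K * (real C * tail_energy h (nat \<lceil>(d - 1) * real K\<rceil>))"
    if "K0 \<le> K" for K L
  proof -
    have "(\<Sum>k<L. if K \<le> k then (inner (a k) (h m))\<^sup>2 else 0)
          \<le> (\<Sum>k<L. tail_energy a K * (if K \<le> k then hit_energy h m k else 0))"
      using K0[OF that] by (intro sum_mono) simp
    also have "\<dots> = tail_energy a K * (\<Sum>k<L. if K \<le> k then hit_energy h m k else 0)"
      by (rule sum_distrib_left[symmetric])
    also have "\<dots> \<le> tail_energy a K * (real C * tail_energy h (nat \<lceil>(d - 1) * real K\<rceil>))"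
      using hit_energy_sum_bound[OF h C] tail_energy_nonneg[OF coeff_H2] by (rule mult_left_mono)
    finally show ?thesis .
  qed
  then show ?thesis
    by blast
qed

end

section \<open>A direction in which the coefficients concentrate\<close>

definition tail_mass :: "(nat \<Rightarrow> 'a::real_normed_vector) \<Rightarrow> nat \<Rightarrow> 'a set \<Rightarrow> real" where
  "tail_mass a K U = (\<Sum>k. if K \<le> k \<and> sgn (a k) \<in> U then (norm (a k))\<^sup>2 else 0) / tail_energy a K"

lemma tail_mass_summable:
  assumes "a \<in> H2"
  shows "summable (\<lambda>k. if K \<le> k \<and> sgn (a k) \<in> U then (norm (a k))\<^sup>2 else 0)"
  by (rule summable_comparison_test'[where g = "\<lambda>k. (norm (a k))\<^sup>2"])
    (use assms in \<open>auto simp: H2_def\<close>)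

lemma tail_mass_nonneg: "a \<in> H2 \<Longrightarrow> 0 \<le> tail_mass a K U"
  unfolding tail_mass_def
  by (intro divide_nonneg_nonneg suminf_nonneg tail_mass_summable tail_energy_nonneg) simp_all

lemma tail_mass_cover:
  fixes a :: "nat \<Rightarrow> 'a::real_normed_vector"
  assumes a: "a \<in> H2" and "a K \<noteq> 0" and "finite F"
    and cover: "\<And>k. \<exists>x\<in>F. sgn (a k) \<in> U x"
  shows "1 \<le> (\<Sum>x\<in>F. tail_mass a K (U x))"
proof -
  define mass where "mass x k = (if K \<le> k \<and> sgn (a k) \<in> U x then (norm (a k))\<^sup>2 else 0)" for x k
  have "tail_energy a K \<le> (\<Sum>k. \<Sum>x\<in>F. mass x k)"
    unfolding tail_energy_def
  proof (rule suminf_le)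
    show "summable (\<lambda>k. \<Sum>x\<in>F. mass x k)"
      unfolding mass_def using tail_mass_summable[OF a] by (rule summable_sum)
    show "summable (\<lambda>k. if K \<le> k then (norm (a k))\<^sup>2 else 0)"
      using a by (rule tail_energy_summable)
    fix k
    show "(if K \<le> k then (norm (a k))\<^sup>2 else 0) \<le> (\<Sum>x\<in>F. mass x k)"
    proof (cases "K \<le> k")
      case True
      obtain x where x: "x \<in> F" "sgn (a k) \<in> U x"
        using cover by blast
      then have "mass x k \<le> (\<Sum>x\<in>F. mass x k)"
        using \<open>finite F\<close> by (intro member_le_sum) (auto simp: mass_def)
      then show ?thesis
        using True x by (simp add: mass_def)
    qed (simp add: mass_def sum_nonneg)
  qed
  also have "\<dots> = (\<Sum>x\<in>F. \<Sum>k. mass x k)"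
    unfolding mass_def using tail_mass_summable[OF a] by (rule suminf_sum)
  finally have "1 \<le> (\<Sum>x\<in>F. \<Sum>k. mass x k) / tail_energy a K"
    using tail_energy_pos[OF a \<open>a K \<noteq> 0\<close>] by simp
  also have "\<dots> = (\<Sum>x\<in>F. tail_mass a K (U x))"
    by (simp add: tail_mass_def mass_def sum_divide_distrib)
  finally show ?thesis .
qed

text \<open>Compactness argument: if every point of the closure of the directions had a
  neighbourhood of asymptotically vanishing mass, finitely many such neighbourhoods would
  cover all directions, yet their masses always add up to at least 1.\<close>
lemma concentration_direction:
  fixes a :: "nat \<Rightarrow> 'a::real_normed_vector"
  assumes a: "a \<in> H2" and nonzero: "\<forall>k. a k \<noteq> 0"
    and compact: "compact (closure (range (\<lambda>k. sgn (a k))))"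
  shows "\<exists>x\<in>closure (range (\<lambda>k. sgn (a k))). \<forall>r>0. \<not> (\<lambda>K. tail_mass a K (ball x r)) \<longlonglongrightarrow> 0"
proof (rule ccontr)
  define D where "D = closure (range (\<lambda>k. sgn (a k)))"
  assume "\<not> ?thesis"
  then obtain R where R: "\<And>x. x \<in> D \<Longrightarrow> 0 < R x \<and> (\<lambda>K. tail_mass a K (ball x (R x))) \<longlonglongrightarrow> 0"
    unfolding D_def by metis
  obtain F where F: "F \<subseteq> D" "finite F" "D \<subseteq> (\<Union>x\<in>F. ball x (R x))"
  proof (rule compactE_image[OF compact[folded D_def], where f = "\<lambda>x. ball x (R x)" and C = D])
    show "D \<subseteq> (\<Union>x\<in>D. ball x (R x))"
      using R by force
  qed auto
  have cover: "\<exists>x\<in>F. sgn (a k) \<in> ball x (R x)" for k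
  proof -
    have "sgn (a k) \<in> D"
      unfolding D_def by (rule closure_subset[THEN subsetD]) simp
    then show ?thesis
      using F(3) by blast
  qed
  have "(\<lambda>K. \<Sum>x\<in>F. tail_mass a K (ball x (R x))) \<longlonglongrightarrow> 0"
    using R F(1) by (intro tendsto_null_sum) auto
  moreover have "1 \<le> (\<Sum>x\<in>F. tail_mass a K (ball x (R x)))" for K
    using cover by (rule tail_mass_cover[OF a nonzero[rule_format] F(2)])
  ultimately have "1 \<le> (0::real)"
    by (intro LIMSEQ_le_const) auto
  then show False
    by simp
qed

lemma inner_bounded_below_near:
  fixes v x :: "'a::real_inner"
  assumes "inner v x \<noteq> 0"
  shows "\<exists>r>0. \<forall>y\<in>ball x r. \<bar>inner v x\<bar> / 2 \<le> \<bar>inner y v\<bar>"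
proof -
  define r where "r = \<bar>inner v x\<bar> / (2 * (norm v + 1))"
  have pos: "0 < 2 * (norm v + 1)"
    by (simp add: add_nonneg_pos)
  then have "0 < r"
    unfolding r_def using assms by simp
  have "\<bar>inner v x\<bar> / 2 \<le> \<bar>inner y v\<bar>" if "y \<in> ball x r" for y
  proof -
    have "\<bar>inner (y - x) v\<bar> \<le> norm (y - x) * norm v"
      by (rule Cauchy_Schwarz_ineq2)
    also have "\<dots> \<le> r * (norm v + 1)"
      using that \<open>0 < r\<close> by (intro mult_mono) (auto simp: dist_norm norm_minus_commute)
    also have "r * (norm v + 1) = \<bar>inner v x\<bar> / 2"
      unfolding r_def using pos by (simp add: field_simps)
    finally have "\<bar>inner (y - x) v\<bar> \<le> \<bar>inner v x\<bar> / 2" .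
    moreover have "inner y v = inner v x + inner (y - x) v"
      by (simp add: inner_diff_left inner_commute[of x v])
    ultimately show ?thesis
      by linarith
  qed
  with \<open>0 < r\<close> show ?thesis
    by blast
qed

lemma tail_mass_le:
  fixes a :: "nat \<Rightarrow> 'a::real_inner"
  assumes a: "a \<in> H2" "a K \<noteq> 0" and "0 < c"
    and large: "\<And>k. sgn (a k) \<in> U \<Longrightarrow> c * (norm (a k))\<^sup>2 \<le> (inner (a k) v)\<^sup>2"
    and partial: "\<And>L. (\<Sum>k<L. if K \<le> k then (inner (a k) v)\<^sup>2 else 0) \<le> tail_energy a K * B"
  shows "tail_mass a K U \<le> B / c"
proof -
  have "(\<Sum>k. if K \<le> k \<and> sgn (a k) \<in> U then (norm (a k))\<^sup>2 else 0) \<le> tail_energy a K * B / c"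
  proof (rule suminf_le_const[OF tail_mass_summable[OF a(1)]])
    fix L
    have "c * (\<Sum>k<L. if K \<le> k \<and> sgn (a k) \<in> U then (norm (a k))\<^sup>2 else 0)
          \<le> (\<Sum>k<L. if K \<le> k then (inner (a k) v)\<^sup>2 else 0)"
      unfolding sum_distrib_left using large by (intro sum_mono) auto
    also have "\<dots> \<le> tail_energy a K * B"
      by (rule partial)
    finally show "(\<Sum>k<L. if K \<le> k \<and> sgn (a k) \<in> U then (norm (a k))\<^sup>2 else 0)
                  \<le> tail_energy a K * B / c"
      using \<open>0 < c\<close> by (simp add: pos_le_divide_eq mult.commute)
  qed
  moreover have W: "0 < tail_energy a K"
    using tail_energy_pos[OF a] .
  ultimately have "tail_mass a K U \<le> tail_energy a K * B / c / tail_energy a K"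
    unfolding tail_mass_def by (intro divide_right_mono) simp_all
  also have "\<dots> = B / c"
    using W by simp
  finally show ?thesis .
qed

context lacunary_series
begin

text \<open>If h is orthogonal to all tail shifts of f, each coefficient h m is orthogonal to any
  direction x around which the coefficients of f keep a non-vanishing proportion of their
  tail energy: near x the terms (a k, h m)^2 are comparable to |a k|^2, while by the key
  estimate their total is a vanishing proportion of the tail energy.\<close>
lemma orthogonal_to_concentration_direction:
  assumes nonzero: "\<forall>k. a k \<noteq> 0" and h: "h \<in> H2"
    and orth: "\<forall>p\<ge>N. (\<Sum>i. inner (h i) (f (i + p))) = 0"
    and concentrated: "\<forall>r>0. \<not> (\<lambda>K. tail_mass a K (ball x r)) \<longlonglongrightarrow> 0"
  shows "inner (h m) x = 0"
proof (rule ccontr)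
  assume "inner (h m) x \<noteq> 0"
  then obtain r where "0 < r" and near: "\<And>y. y \<in> ball x r \<Longrightarrow> \<bar>inner (h m) x\<bar> / 2 \<le> \<bar>inner y (h m)\<bar>"
    using inner_bounded_below_near by blast
  define c where "c = (\<bar>inner (h m) x\<bar> / 2)\<^sup>2"
  have "0 < c"
    unfolding c_def using \<open>inner (h m) x \<noteq> 0\<close> by simp
  have large: "c * (norm (a k))\<^sup>2 \<le> (inner (a k) (h m))\<^sup>2" if "sgn (a k) \<in> ball x r" for k
  proof -
    have "inner (a k) (h m) = norm (a k) * inner (sgn (a k)) (h m)"
      using nonzero[rule_format, of k] by (simp add: sgn_div_norm)
    moreover have "c \<le> \<bar>inner (sgn (a k)) (h m)\<bar>\<^sup>2"
      unfolding c_def by (rule power_mono[OF near[OF that]]) simp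
    ultimately show ?thesis
      by (simp add: power_mult_distrib mult.commute[of c] mult_left_mono)
  qed
  obtain K0 C where K0: "\<And>K L. K0 \<le> K \<Longrightarrow> (\<Sum>k<L. if K \<le> k then (inner (a k) (h m))\<^sup>2 else 0)
                        \<le> tail_energy a K * (real C * tail_energy h (nat \<lceil>(d - 1) * real K\<rceil>))"
    using orthogonal_coefficients_bound[OF h orth] by blast
  define T where "T K = real C * tail_energy h (nat \<lceil>(d - 1) * real K\<rceil>) / c" for K
  have "(\<lambda>K. tail_energy h (nat \<lceil>(d - 1) * real K\<rceil>)) \<longlonglongrightarrow> 0"
    using ratio_gt_1 by (intro filterlim_compose[OF tail_energy_tendsto_0[OF h] nat_ceiling_at_top]) simp
  then have T: "T \<longlonglongrightarrow> 0"
    unfolding T_def[abs_def] by (intro tendsto_divide_zero tendsto_mult_right_zero)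
  have bound: "tail_mass a K (ball x r) \<le> T K" if "K0 \<le> K" for K
    unfolding T_def using coeff_H2 nonzero[rule_format, of K] \<open>0 < c\<close> large K0[OF that]
    by (rule tail_mass_le)
  have "\<forall>\<^sub>F K in sequentially. 0 \<le> tail_mass a K (ball x r)"
    using tail_mass_nonneg[OF coeff_H2] by simp
  moreover have "\<forall>\<^sub>F K in sequentially. tail_mass a K (ball x r) \<le> T K"
    unfolding eventually_sequentially using bound by blast
  ultimately have "(\<lambda>K. tail_mass a K (ball x r)) \<longlonglongrightarrow> 0"
    using tendsto_const T by (rule tendsto_sandwich)
  then show False
    using concentrated \<open>0 < r\<close> by blast
qed

end

lemma separation_from_Egen:
  fixes J :: "'a::{real_inner,complete_space} \<Rightarrow> 'a"
  assumes cs: "complex_structure J" and g: "g \<in> H2" and w: "w \<in> H2" and "w \<notin> Egen J g"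
  shows "\<exists>v. (\<forall>p\<in>shift_span J g. inner v (mk_l2 p) = 0) \<and> inner v (mk_l2 w) \<noteq> 0"
proof -
  obtain e where "0 < e" and far: "\<And>p. p \<in> shift_span J g \<Longrightarrow> e \<le> H2dist w p"
    using assms(4) w by (auto simp: Egen_def not_less)
  have "e \<le> norm (mk_l2 w - q)" if "q \<in> mk_l2 ` shift_span J g" for q
    using that far norm_mk_l2_diff[OF w shift_span_H2[OF cs g]] by auto
  from subspace_separation[OF shift_span_subspace[OF cs g] \<open>0 < e\<close> this]
  obtain v where "\<forall>q\<in>mk_l2 ` shift_span J g. inner v q = 0" "inner v (mk_l2 w) \<noteq> 0"
    by blast
  then show ?thesis
    by auto
qed

lemma orthogonal_to_shifts:
  fixes J :: "'a::real_inner \<Rightarrow> 'a"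
  assumes cs: "complex_structure J" and g: "g \<in> H2"
    and orth: "\<forall>p\<in>shift_span J g. inner v (mk_l2 p) = 0"
  shows "(\<Sum>i. inner (seq v i) (g (i + q))) = 0"
    and "(\<Sum>i. inner (J (seq v i)) (g (i + q))) = 0"
proof -
  have g_shift: "(\<lambda>i. g (i + q)) \<in> H2"
    using g by (rule H2_shift)
  have span: "(\<lambda>i. cscale J c (g (i + q))) \<in> shift_span J g" for c
    using shift_span_single[of J c q g] by (simp add: bshift_pow)
  have "inner v (mk_l2 (\<lambda>i. g (i + q))) = 0"
    using orth span[of 1] by (simp add: cscale_one)
  then show "(\<Sum>i. inner (seq v i) (g (i + q))) = 0"
    by (simp add: inner_mk_l2[OF g_shift])
  have "inner v (mk_l2 (\<lambda>i. J (g (i + q)))) = 0"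
    using orth span[of \<i>] by (simp add: cscale_i)
  then have "(\<Sum>i. inner (seq v i) (J (g (i + q)))) = 0"
    by (simp add: inner_mk_l2[OF J_H2[OF cs g_shift]])
  moreover have "(\<Sum>i. inner (J (seq v i)) (g (i + q))) = - (\<Sum>i. inner (seq v i) (J (g (i + q))))"
    using suminf_minus[OF H2_inner_summable[OF seq_H2 J_H2[OF cs g_shift]]]
    by (simp add: J_skew[OF cs])
  ultimately show "(\<Sum>i. inner (J (seq v i)) (g (i + q))) = 0"
    by simp
qed

lemma H2_tensor_H2:
  assumes cs: "complex_structure J" and "w \<in> H2_tensor J x"
  shows "w \<in> H2"
proof -
  obtain c where w: "w = (\<lambda>n. cscale J (c n) x)" and c: "summable (\<lambda>n. (cmod (c n))\<^sup>2)"
    using assms(2) by (auto simp: H2_tensor_def)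
  show ?thesis
    using summable_mult2[OF c, of "(norm x)\<^sup>2"]
    by (simp add: H2_def w norm_cscale[OF cs] power_mult_distrib)
qed

lemma orthogonal_to_tensor:
  fixes J :: "'a::real_inner \<Rightarrow> 'a"
  assumes cs: "complex_structure J" and w: "w \<in> H2_tensor J x"
    and orth: "\<And>m. inner (seq v m) x = 0" and orth_J: "\<And>m. inner (J (seq v m)) x = 0"
  shows "inner v (mk_l2 w) = 0"
proof -
  obtain c where w_eq: "w = (\<lambda>n. cscale J (c n) x)"
    using w by (auto simp: H2_tensor_def)
  have "inner (seq v m) (w m) = 0" for m
  proof -
    have "inner (seq v m) (J x) = - inner (J (seq v m)) x"
      using J_skew[OF cs, of "seq v m" x] by simp
    then show ?thesis
      using orth[of m] orth_J[of m] by (simp add: w_eq cscale_def inner_add_right)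
  qed
  then show ?thesis
    by (simp add: inner_mk_l2[OF H2_tensor_H2[OF cs w]])
qed

text \<open>Otherwise a separating v would be orthogonal to all shifts
  S^{*p} f and J S^{*p} f with p \<ge> N; then its coordinates are orthogonal to x and J x,
  hence v is orthogonal to every element of H^2 \<otimes> x.\<close>
lemma tensor_in_cyclic_subspace:
  fixes J :: "'a::{real_inner,complete_space} \<Rightarrow> 'a" and f a :: "nat \<Rightarrow> 'a"
  assumes "lacunary_series n d f a"
    and cs: "complex_structure J" and nonzero: "\<forall>k. a k \<noteq> 0"
    and concentrated: "\<forall>r>0. \<not> (\<lambda>K. tail_mass a K (ball x r)) \<longlonglongrightarrow> 0"
  shows "H2_tensor J x \<subseteq> Egen J ((bshift ^^ N) f)"
proof
  interpret lacunary_series n d f a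
    by fact
  fix w
  assume w: "w \<in> H2_tensor J x"
  define g where "g = (bshift ^^ N) f"
  have g: "g \<in> H2" and g_shift: "\<And>i q. g (i + q) = f (i + (q + N))"
    using H2_shift[OF f_H2, of N] by (simp_all add: g_def bshift_pow[abs_def] add.assoc)
  show "w \<in> Egen J g"
  proof (rule ccontr)
    assume "w \<notin> Egen J g"
    then obtain v where orth: "\<forall>p\<in>shift_span J g. inner v (mk_l2 p) = 0"
      and "inner v (mk_l2 w) \<noteq> 0"
      using separation_from_Egen[OF cs g H2_tensor_H2[OF cs w]] by blast
    have "(\<Sum>i. inner (seq v i) (f (i + p))) = 0 \<and> (\<Sum>i. inner (J (seq v i)) (f (i + p))) = 0"
      if "N \<le> p" for p
    proof -
      have "g (i + (p - N)) = f (i + p)" for i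
        using g_shift[of i "p - N"] that by simp
      then show ?thesis
        using orthogonal_to_shifts[OF cs g orth, of "p - N"] by simp
    qed
    then have "\<forall>p\<ge>N. (\<Sum>i. inner (seq v i) (f (i + p))) = 0"
      and "\<forall>p\<ge>N. (\<Sum>i. inner (J (seq v i)) (f (i + p))) = 0"
      by simp_all
    then have "inner v (mk_l2 w) = 0"
      using orthogonal_to_concentration_direction[OF nonzero _ _ concentrated]
        seq_H2 J_H2[OF cs seq_H2] by (intro orthogonal_to_tensor[OF cs w]) blast+
    with \<open>inner v (mk_l2 w) \<noteq> 0\<close> show False ..
  qed
qed

lemma closure_directions_unit:
  fixes a :: "nat \<Rightarrow> 'a::real_normed_vector"
  assumes "\<forall>k. a k \<noteq> 0"
  shows "closure (range (\<lambda>k. sgn (a k))) \<subseteq> sphere 0 1"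
proof (rule closure_minimal)
  show "range (\<lambda>k. sgn (a k)) \<subseteq> sphere 0 1"
    using assms by (auto simp: norm_sgn)
  show "closed (sphere (0::'a) 1)"
    using closed_Diff[OF closed_cball open_ball, of 0 1 0 1] by (simp add: cball_diff_eq_sphere)
qed

theorem mainTheorem5:
  fixes J :: "'a::{real_inner, complete_space} \<Rightarrow> 'a"
    and f :: "nat \<Rightarrow> 'a" and a :: "nat \<Rightarrow> 'a"
    and n :: "nat \<Rightarrow> nat" and d :: real
  assumes "complex_structure J"
    and "separable_space TYPE('a)"
    and "d > 1" and "n 0 \<ge> 1" and "\<forall>k. real (n (Suc k)) \<ge> d * real (n k)"
    and "\<forall>k. f (n k) = a k" and "\<forall>j. j \<notin> range n \<longrightarrow> f j = 0"
    and "f \<in> H2"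
    and "\<forall>k. a k \<noteq> 0"
    and "compact (closure (range (\<lambda>k. (1 / norm (a k)) *\<^sub>R a k)))"
  shows "\<exists>x. x \<noteq> 0 \<and> (\<forall>N. H2_tensor J x \<subseteq> Egen J ((bshift ^^ N) f))"
proof -
  have series: "lacunary_series n d f a"
    using assms(3-8) by unfold_locales
  then interpret lacunary_series n d f a .
  have directions: "(\<lambda>k. (1 / norm (a k)) *\<^sub>R a k) = (\<lambda>k. sgn (a k))"
    by (simp add: sgn_div_norm divide_inverse_commute)
  from assms(10) have "compact (closure (range (\<lambda>k. sgn (a k))))"
    unfolding directions .
  then obtain x where x: "x \<in> closure (range (\<lambda>k. sgn (a k)))"
    and concentrated: "\<forall>r>0. \<not> (\<lambda>K. tail_mass a K (ball x r)) \<longlonglongrightarrow> 0"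
    using concentration_direction[OF coeff_H2 assms(9)] by blast
  have "x \<in> sphere 0 1"
    using closure_directions_unit[OF assms(9)] x by (rule subsetD)
  then have "x \<noteq> 0"
    by auto
  moreover have "H2_tensor J x \<subseteq> Egen J ((bshift ^^ N) f)" for N
    using tensor_in_cyclic_subspace[OF series assms(1,9) concentrated] .
  ultimately show ?thesis
    by blast
qed

end
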